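(* Let $p>2$ be an integer, $\theta\in(0,1)$, let $\bm X\in\mathbb R^{n\times r}$ have i.i.d. $\mathcal{BG}(\theta)$ entries, and $\gamma_p=2^{p/2}\Gamma(\frac{p+1}{2})/\sqrt\pi$. For every $\bm Q\in\mathbb O(n)$ there exists $\bm P\in\mathrm{SP}(n)$ such that $$\theta-\frac{1}{nr\gamma_p}\mathbb E_{\bm X}\|\bm Q\bm X\|_p^p\ge\frac{\theta(1-\theta)}{2nC_p}\|\bm Q-\bm P\|_F^2,\qquad C_p=\big(1-2(0.5)^{p/2}\big)^{-1}.$$
   Context: $\mathcal{BG}(\theta)$ is the law of $b\cdot g$ with $b\sim\mathrm{Ber}(\theta)$, $g\sim\mathcal N(0,1)$ independent. $\mathbb O(n)$: real $n\times n$ orthogonal matrices; $\mathrm{SP}(n)$: signed permutation matrices. For a matrix $\bm M$, $\|\bm M\|_p^p=\sum_{i,j}|M_{ij}|^p$; $\|\cdot\|_F$ the Frobenius norm; $\Gamma$ the Gamma function. *)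

theory Defs
  imports "HOL-Probability.Probability"
begin

definition std_gaussian :: "real measure" where
  "std_gaussian = density lborel (\<lambda>x. ennreal (std_normal_density x))"

definition BG :: "real \<Rightarrow> real measure" where
  "BG \<theta> = distr (measure_pmf (bernoulli_pmf \<theta>) \<Otimes>\<^sub>M std_gaussian) borel
              (\<lambda>(b, g). (if b then 1 else 0) * g)"

definition BG_matrix :: "real \<Rightarrow> (('n::finite \<times> 'r::finite) \<Rightarrow> real) measure" where
  "BG_matrix \<theta> = PiM UNIV (\<lambda>_. BG \<theta>)"

definition mat_of_entries :: "(('n::finite \<times> 'r::finite) \<Rightarrow> real) \<Rightarrow> real^'r^'n" where
  "mat_of_entries x = (\<chi> i j. x (i, j))"

definition entry_pnorm_pow :: "nat \<Rightarrow> real^'c^'m \<Rightarrow> real" where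
  "entry_pnorm_pow p M = (\<Sum>i\<in>UNIV. \<Sum>j\<in>UNIV. \<bar>M $ i $ j\<bar> ^ p)"

definition frob_sq :: "real^'c^'m \<Rightarrow> real" where
  "frob_sq M = (\<Sum>i\<in>UNIV. \<Sum>j\<in>UNIV. (M $ i $ j)\<^sup>2)"

definition signed_perm_matrix :: "real^'n^'n \<Rightarrow> bool" where
  "signed_perm_matrix P \<longleftrightarrow> (\<exists>\<sigma> s. \<sigma> permutes (UNIV::'n set) \<and> (\<forall>i. s i \<in> {-1, 1::real}) \<and>
      (\<forall>i j. P $ i $ j = (if j = \<sigma> i then s i else 0)))"

definition gamma_p :: "nat \<Rightarrow> real" where
  "gamma_p p = 2 powr (real p / 2) * Gamma ((real p + 1) / 2) / sqrt pi"

definition C_p :: "nat \<Rightarrow> real" where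
  "C_p p = 1 / (1 - 2 * (1/2) powr (real p / 2))"

end

theory Submission
  imports Defs
begin

text \<open>Condition on the Bernoulli support pattern \<open>\<beta>\<close> of \<open>X\<close>. Given \<open>\<beta>\<close>, the entry \<open>(QX)_ij\<close> is a
  centred Gaussian of variance \<open>t = sum_k Q_ik^2 \<beta>_kj\<close>, whose \<open>p\<close>-th absolute moment is
  \<open>\<gamma>_p t^(p/2)\<close>, while \<open>E t = \<theta>\<close> because the rows of \<open>Q\<close> are unit vectors. So the left-hand side
  averages \<open>E (t - t^(p/2))\<close>, and convexity of \<open>x^(p/2)\<close> gives \<open>t - t^(p/2) \<ge> min t (1 - t) / C_p\<close>.
  A symmetric nonnegative \<open>c\<close> with zero diagonal and row sums at most \<open>Q_ik^2\<close> has a cut weight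
  \<open>sum_kl c_kl \<beta>_k (1 - \<beta>_l) \<le> min t (1 - t)\<close> of expectation \<open>\<theta> (1 - \<theta>) sum c\<close>. Choosing \<open>c\<close>
  according to whether row \<open>i\<close> has an entry with \<open>Q_ik^2 > 1/2\<close> bounds the deficit of row \<open>i\<close> by
  \<open>\<theta> (1 - \<theta>) (1 - |Q_i\<sigma>(i)|) / C_p\<close>, where the permutation \<open>\<sigma>\<close> passes through these dominant
  entries, and \<open>|Q - P|_F^2 = 2 sum_i (1 - |Q_i\<sigma>(i)|)\<close> for the signed permutation \<open>P\<close> that follows
  the signs of \<open>Q\<close> along \<open>\<sigma>\<close>.\<close>

section \<open>The Bernoulli--Gaussian product law\<close>

lemma prob_space_std_gaussian: "prob_space std_gaussian"
  unfolding std_gaussian_def by (rule prob_space_normal_density) simp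

lemma sets_std_gaussian [simp, measurable_cong]: "sets std_gaussian = sets borel"
  unfolding std_gaussian_def by simp

lemma space_std_gaussian [simp]: "space std_gaussian = UNIV"
  unfolding std_gaussian_def by simp

lemma sets_BG [simp, measurable_cong]: "sets (BG \<theta>) = sets borel"
  unfolding BG_def by simp

lemma prob_space_BG: "prob_space (BG \<theta>)"
proof -
  interpret G: prob_space std_gaussian by (rule prob_space_std_gaussian)
  interpret P: pair_prob_space "measure_pmf (bernoulli_pmf \<theta>)" std_gaussian
    by (simp add: pair_prob_space_def pair_sigma_finite_def prob_space_imp_sigma_finite
        prob_space_measure_pmf G.prob_space_axioms)
  show ?thesis unfolding BG_def by (rule P.P.prob_space_distr) measurable
qed

lemma emeasure_BG:
  assumes "0 \<le> \<theta>" "\<theta> \<le> 1" and A: "A \<in> sets borel"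
  shows "emeasure (BG \<theta>) A = ennreal \<theta> * emeasure std_gaussian A + ennreal (1 - \<theta>) * indicator A 0"
proof -
  interpret G: prob_space std_gaussian by (rule prob_space_std_gaussian)
  let ?M = "measure_pmf (bernoulli_pmf \<theta>) \<Otimes>\<^sub>M std_gaussian"
  let ?h = "\<lambda>(b::bool, g::real). (if b then 1 else 0) * g"
  have m: "?h \<in> measurable ?M borel"
    by measurable
  have "emeasure (BG \<theta>) A = emeasure ?M (?h -` A \<inter> space ?M)"
    unfolding BG_def using m A by (simp add: emeasure_distr)
  also have "\<dots> = (\<integral>\<^sup>+b. emeasure std_gaussian (Pair b -` (?h -` A \<inter> space ?M)) \<partial>measure_pmf (bernoulli_pmf \<theta>))"
    by (rule G.emeasure_pair_measure_alt) (use m A in measurable)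
  also have "\<dots> = (\<Sum>b\<in>{True, False}. emeasure std_gaussian (Pair b -` (?h -` A \<inter> space ?M)) * pmf (bernoulli_pmf \<theta>) b)"
    by (rule nn_integral_measure_pmf_support) auto
  also have "\<dots> = ennreal \<theta> * emeasure std_gaussian A + ennreal (1 - \<theta>) * indicator A 0"
    using assms by (auto simp: space_pair_measure indicator_def vimage_def mult.commute cong: conj_cong)
       (auto simp: Collect_mem_eq G.emeasure_space_1[simplified])
  finally show ?thesis .
qed

text \<open>A vector of i.i.d. \<open>BG(\<theta>)\<close> entries is a Gaussian vector masked by an independent
  Bernoulli pattern \<open>\<beta>\<close>.\<close>

definition bernoulli_pattern :: "real \<Rightarrow> ('a::finite \<Rightarrow> bool) measure" where
  "bernoulli_pattern \<theta> = measure_pmf (Pi_pmf UNIV False (\<lambda>_. bernoulli_pmf \<theta>))"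

definition gaussian_vector :: "('a::finite \<Rightarrow> real) measure" where
  "gaussian_vector = PiM UNIV (\<lambda>_. std_gaussian)"

definition masked :: "('a \<Rightarrow> bool) \<times> ('a \<Rightarrow> real) \<Rightarrow> 'a \<Rightarrow> real" where
  "masked = (\<lambda>(\<beta>, \<gamma>) a. of_bool (\<beta> a) * \<gamma> a)"

definition pattern_weight :: "real \<Rightarrow> ('a::finite \<Rightarrow> bool) \<Rightarrow> real" where
  "pattern_weight \<theta> \<beta> = (\<Prod>a\<in>UNIV. if \<beta> a then \<theta> else 1 - \<theta>)"

lemma pattern_weight_nonneg: "0 \<le> \<theta> \<Longrightarrow> \<theta> \<le> 1 \<Longrightarrow> 0 \<le> pattern_weight \<theta> \<beta>"
  unfolding pattern_weight_def by (intro prod_nonneg) auto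

lemma pmf_bernoulli_pattern:
  "0 \<le> \<theta> \<Longrightarrow> \<theta> \<le> 1 \<Longrightarrow>
    pmf (Pi_pmf UNIV False (\<lambda>_. bernoulli_pmf \<theta>)) \<beta> = pattern_weight \<theta> (\<beta>::'a::finite \<Rightarrow> bool)"
  by (simp add: pmf_Pi pattern_weight_def) (intro prod.cong refl; simp)

lemma sum_bool_funs_prod:
  fixes h :: "'a::finite \<Rightarrow> bool \<Rightarrow> 'c::comm_semiring_1"
  shows "(\<Sum>\<beta>\<in>UNIV. \<Prod>a\<in>UNIV. h a (\<beta> a)) = (\<Prod>a\<in>UNIV. h a True + h a False)"
proof -
  have "(\<Prod>a\<in>UNIV. h a True + h a False) = (\<Prod>a\<in>UNIV. \<Sum>v\<in>UNIV. h a v)"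
    by (simp add: UNIV_bool add.commute)
  also have "\<dots> = (\<Sum>g\<in>PiE UNIV (\<lambda>_. UNIV). \<Prod>a\<in>UNIV. h a (g a))"
    by (rule prod_sum_PiE) auto
  also have "PiE UNIV (\<lambda>_. UNIV) = (UNIV :: ('a \<Rightarrow> bool) set)"
    by auto
  finally show ?thesis by simp
qed

lemma measurable_masked:
  "masked \<in> measurable (bernoulli_pattern \<theta> \<Otimes>\<^sub>M gaussian_vector) (PiM UNIV (\<lambda>_::'a::finite. BG \<theta>))"
proof (rule measurable_PiM_single')
  fix a :: 'a
  have "(\<lambda>\<beta>::'a \<Rightarrow> bool. of_bool (\<beta> a) :: real) \<in> borel_measurable (bernoulli_pattern \<theta>)"
    unfolding bernoulli_pattern_def by simp
  then have fst: "(\<lambda>x. of_bool (fst x a) :: real) \<in> borel_measurable (bernoulli_pattern \<theta> \<Otimes>\<^sub>M gaussian_vector)"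
    by (rule measurable_compose[OF measurable_fst, of "\<lambda>\<beta>. of_bool (\<beta> a)", simplified])
  have "(\<lambda>\<gamma>::'a \<Rightarrow> real. \<gamma> a) \<in> measurable gaussian_vector std_gaussian"
    unfolding gaussian_vector_def by (rule measurable_component_singleton) simp
  then have "(\<lambda>\<gamma>::'a \<Rightarrow> real. \<gamma> a) \<in> borel_measurable gaussian_vector"
    by (simp add: measurable_cong_sets[OF refl sets_std_gaussian])
  then have snd: "(\<lambda>x. snd x a) \<in> borel_measurable (bernoulli_pattern \<theta> \<Otimes>\<^sub>M gaussian_vector)"
    by (rule measurable_compose[OF measurable_snd, of "\<lambda>\<gamma>. \<gamma> a", simplified])
  show "(\<lambda>\<omega>. masked \<omega> a) \<in> measurable (bernoulli_pattern \<theta> \<Otimes>\<^sub>M gaussian_vector) (BG \<theta>)"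
    using borel_measurable_times[OF fst snd]
    unfolding masked_def by (simp add: case_prod_beta measurable_cong_sets[OF refl sets_BG])
qed (auto simp: space_PiM BG_def)

lemma emeasure_masked_vimage_PiE:
  assumes "0 \<le> \<theta>" "\<theta> \<le> 1" and A: "\<And>a. A a \<in> sets borel"
  shows "emeasure (bernoulli_pattern \<theta> \<Otimes>\<^sub>M gaussian_vector)
      (masked -` PiE UNIV A \<inter> space (bernoulli_pattern \<theta> \<Otimes>\<^sub>M gaussian_vector)) =
    (\<Prod>a\<in>UNIV. emeasure (BG \<theta>) (A (a::'a::finite)))"
proof -
  interpret G: prob_space std_gaussian by (rule prob_space_std_gaussian)
  interpret Gs: product_prob_space "\<lambda>_::'a. std_gaussian" UNIV
    by unfold_locales
  interpret GV: prob_space "gaussian_vector :: ('a \<Rightarrow> real) measure"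
    unfolding gaussian_vector_def by (rule prob_space_PiM) (rule G.prob_space_axioms)
  let ?M = "bernoulli_pattern \<theta> \<Otimes>\<^sub>M (gaussian_vector :: ('a \<Rightarrow> real) measure)"
  have "PiE UNIV A \<in> sets (PiM UNIV (\<lambda>_::'a. BG \<theta>))"
    using A by (intro sets_PiM_I_finite) auto
  then have box: "masked -` PiE UNIV A \<inter> space ?M \<in> sets ?M"
    by (rule measurable_sets[OF measurable_masked])
  \<comment> \<open>the section of the box at a pattern \<open>\<beta>\<close> is again a box\<close>
  define B where "B \<beta> a = (if \<beta> a then A a else if 0 \<in> A a then UNIV else {})" for \<beta> a
  have B: "B \<beta> a \<in> sets std_gaussian" for \<beta> a
    using A[of a] by (simp add: B_def)
  have slice: "Pair \<beta> -` (masked -` PiE UNIV A \<inter> space ?M) = PiE UNIV (B \<beta>)" for \<beta>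
  proof -
    have "of_bool (\<beta> a) * g \<in> A a \<longleftrightarrow> g \<in> B \<beta> a" for a g
      by (cases "\<beta> a") (auto simp: B_def)
    then show ?thesis
      by (auto simp: masked_def PiE_iff space_pair_measure gaussian_vector_def space_PiM bernoulli_pattern_def)
  qed
  have "emeasure ?M (masked -` PiE UNIV A \<inter> space ?M) =
      (\<integral>\<^sup>+\<beta>. emeasure gaussian_vector (PiE UNIV (B \<beta>)) \<partial>bernoulli_pattern \<theta>)"
    unfolding slice[symmetric] by (rule GV.emeasure_pair_measure_alt[OF box])
  also have "\<dots> = (\<Sum>\<beta>\<in>UNIV. emeasure gaussian_vector (PiE UNIV (B \<beta>)) * pmf (Pi_pmf UNIV False (\<lambda>_. bernoulli_pmf \<theta>)) \<beta>)"
    unfolding bernoulli_pattern_def by (rule nn_integral_measure_pmf_support) auto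
  also have "\<dots> = (\<Sum>\<beta>\<in>UNIV. \<Prod>a\<in>UNIV. emeasure std_gaussian (B \<beta> a) * ennreal (if \<beta> a then \<theta> else 1 - \<theta>))"
  proof (rule sum.cong[OF refl])
    fix \<beta> :: "'a \<Rightarrow> bool"
    have "emeasure gaussian_vector (PiE UNIV (B \<beta>)) = (\<Prod>a\<in>UNIV. emeasure std_gaussian (B \<beta> a))"
      unfolding gaussian_vector_def using B by (intro Gs.emeasure_PiM) auto
    moreover have "ennreal (pmf (Pi_pmf UNIV False (\<lambda>_. bernoulli_pmf \<theta>)) \<beta>) =
        (\<Prod>a\<in>UNIV. ennreal (if \<beta> a then \<theta> else 1 - \<theta>))"
      using assms by (simp add: pmf_bernoulli_pattern pattern_weight_def prod_ennreal)
    ultimately show "emeasure gaussian_vector (PiE UNIV (B \<beta>)) * pmf (Pi_pmf UNIV False (\<lambda>_. bernoulli_pmf \<theta>)) \<beta> =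
        (\<Prod>a\<in>UNIV. emeasure std_gaussian (B \<beta> a) * ennreal (if \<beta> a then \<theta> else 1 - \<theta>))"
      by (simp add: prod.distrib)
  qed
  also have "\<dots> = (\<Prod>a\<in>UNIV. emeasure std_gaussian (A a) * ennreal \<theta> +
      emeasure std_gaussian (if 0 \<in> A a then UNIV else {}) * ennreal (1 - \<theta>))"
    using sum_bool_funs_prod[of "\<lambda>a v. emeasure std_gaussian (if v then A a else if 0 \<in> A a then UNIV else {}) *
        ennreal (if v then \<theta> else 1 - \<theta>)"] by (simp add: B_def)
  also have "\<dots> = (\<Prod>a\<in>UNIV. emeasure (BG \<theta>) (A a))"
    using assms A by (intro prod.cong refl) (auto simp: emeasure_BG G.emeasure_space_1[simplified] mult.commute)
  finally show ?thesis .
qed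

lemma PiM_BG_eq_distr_masked:
  assumes "0 \<le> \<theta>" "\<theta> \<le> 1"
  shows "PiM UNIV (\<lambda>_. BG \<theta>) =
    distr (bernoulli_pattern \<theta> \<Otimes>\<^sub>M gaussian_vector) (PiM UNIV (\<lambda>_. BG \<theta>)) (masked :: _ \<Rightarrow> 'a::finite \<Rightarrow> real)"
proof -
  interpret BGs: product_prob_space "\<lambda>_::'a. BG \<theta>" UNIV
    by (auto simp: product_prob_space_def product_prob_space_axioms_def product_sigma_finite_def
        prob_space_BG prob_space_imp_sigma_finite)
  show ?thesis
  proof (rule BGs.PiM_eqI[symmetric])
    fix A :: "'a \<Rightarrow> real set"
    assume "\<And>i. i \<in> UNIV \<Longrightarrow> A i \<in> sets (BG \<theta>)"
    then have A: "A a \<in> sets borel" for a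
      by simp
    then have "PiE UNIV A \<in> sets (PiM UNIV (\<lambda>_::'a. BG \<theta>))"
      by (intro sets_PiM_I_finite) auto
    then show "emeasure (distr (bernoulli_pattern \<theta> \<Otimes>\<^sub>M gaussian_vector) (PiM UNIV (\<lambda>_. BG \<theta>)) masked) (PiE UNIV A) =
        (\<Prod>i\<in>UNIV. emeasure (BG \<theta>) (A i))"
      using assms A by (simp add: emeasure_distr measurable_masked emeasure_masked_vimage_PiE)
  qed simp_all
qed

lemma nn_integral_PiM_BG:
  assumes "0 \<le> \<theta>" "\<theta> \<le> 1"
    and f: "f \<in> borel_measurable (PiM UNIV (\<lambda>_::'a::finite. borel))"
  shows "(\<integral>\<^sup>+x. f x \<partial>PiM UNIV (\<lambda>_::'a. BG \<theta>)) =
    (\<Sum>\<beta>\<in>UNIV. ennreal (pattern_weight \<theta> \<beta>) * (\<integral>\<^sup>+\<gamma>. f (masked (\<beta>, \<gamma>)) \<partial>gaussian_vector))"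
proof -
  interpret GV: prob_space "gaussian_vector :: ('a \<Rightarrow> real) measure"
    unfolding gaussian_vector_def by (rule prob_space_PiM) (rule prob_space_std_gaussian)
  have sets_eq: "sets (PiM UNIV (\<lambda>_::'a. BG \<theta>)) = sets (PiM UNIV (\<lambda>_::'a. borel))"
    by (rule sets_PiM_cong) auto
  have f': "f \<in> borel_measurable (PiM UNIV (\<lambda>_::'a. BG \<theta>))"
    using f by (simp only: measurable_cong_sets[OF sets_eq refl])
  have "(\<integral>\<^sup>+x. f x \<partial>PiM UNIV (\<lambda>_::'a. BG \<theta>)) = (\<integral>\<^sup>+x. f (masked x) \<partial>(bernoulli_pattern \<theta> \<Otimes>\<^sub>M gaussian_vector))"
    by (subst PiM_BG_eq_distr_masked[OF assms(1,2)]) (rule nn_integral_distr[OF measurable_masked], simp add: f')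
  also have "\<dots> = (\<integral>\<^sup>+\<beta>. \<integral>\<^sup>+\<gamma>. f (masked (\<beta>, \<gamma>)) \<partial>gaussian_vector \<partial>bernoulli_pattern \<theta>)"
    by (rule GV.nn_integral_fst[symmetric, of "\<lambda>x. f (masked x)", simplified])
      (rule measurable_compose[OF measurable_masked f'])
  also have "\<dots> = (\<Sum>\<beta>\<in>UNIV. (\<integral>\<^sup>+\<gamma>. f (masked (\<beta>, \<gamma>)) \<partial>gaussian_vector) * pmf (Pi_pmf UNIV False (\<lambda>_. bernoulli_pmf \<theta>)) \<beta>)"
    unfolding bernoulli_pattern_def by (rule nn_integral_measure_pmf_support) auto
  finally show ?thesis
    using assms by (simp add: pmf_bernoulli_pattern mult.commute)
qed

definition pattern_expectation :: "real \<Rightarrow> (('a::finite \<Rightarrow> bool) \<Rightarrow> real) \<Rightarrow> real" where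
  "pattern_expectation \<theta> F = (\<Sum>\<beta>\<in>UNIV. pattern_weight \<theta> \<beta> * F \<beta>)"

definition masked_mass :: "('k::finite \<Rightarrow> real) \<Rightarrow> ('k \<Rightarrow> 'a) \<Rightarrow> ('a \<Rightarrow> bool) \<Rightarrow> real" where
  "masked_mass w e \<beta> = (\<Sum>k\<in>UNIV. w k * of_bool (\<beta> (e k)))"

lemma pattern_expectation_nonneg:
  "0 \<le> \<theta> \<Longrightarrow> \<theta> \<le> 1 \<Longrightarrow> (\<And>\<beta>. 0 \<le> F \<beta>) \<Longrightarrow> 0 \<le> pattern_expectation \<theta> F"
  unfolding pattern_expectation_def by (intro sum_nonneg mult_nonneg_nonneg pattern_weight_nonneg)

lemma masked_mass_nonneg: "(\<And>k. 0 \<le> w k) \<Longrightarrow> 0 \<le> masked_mass w e \<beta>"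
  unfolding masked_mass_def by (intro sum_nonneg) simp

lemma masked_mass_le_1:
  assumes "\<And>k. 0 \<le> w k" "sum w UNIV = 1"
  shows "masked_mass w e \<beta> \<le> 1"
proof -
  have "masked_mass w e \<beta> \<le> sum w UNIV"
    unfolding masked_mass_def of_bool_def using assms(1) by (intro sum_mono) auto
  then show ?thesis
    using assms(2) by simp
qed

lemma pattern_expectation_diff:
  "pattern_expectation \<theta> (\<lambda>\<beta>. F \<beta> - G \<beta>) = pattern_expectation \<theta> F - pattern_expectation \<theta> G"
  unfolding pattern_expectation_def by (simp add: right_diff_distrib sum_subtractf)

lemma pattern_expectation_cmult: "pattern_expectation \<theta> (\<lambda>\<beta>. c * F \<beta>) = c * pattern_expectation \<theta> F"
  unfolding pattern_expectation_def by (simp add: sum_distrib_left mult_ac)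

lemma pattern_expectation_sum:
  "pattern_expectation \<theta> (\<lambda>\<beta>. \<Sum>k\<in>A. F k \<beta>) = (\<Sum>k\<in>A. pattern_expectation \<theta> (F k))"
  unfolding pattern_expectation_def by (simp add: sum_distrib_left sum.swap[of _ A])

lemma pattern_expectation_mono:
  "0 \<le> \<theta> \<Longrightarrow> \<theta> \<le> 1 \<Longrightarrow> (\<And>\<beta>. F \<beta> \<le> G \<beta>) \<Longrightarrow> pattern_expectation \<theta> F \<le> pattern_expectation \<theta> G"
  unfolding pattern_expectation_def by (intro sum_mono mult_left_mono) (auto intro: pattern_weight_nonneg)

lemma pattern_expectation_prod:
  fixes h :: "'a::finite \<Rightarrow> bool \<Rightarrow> real"
  shows "pattern_expectation \<theta> (\<lambda>\<beta>. \<Prod>a\<in>UNIV. h a (\<beta> a)) = (\<Prod>a\<in>UNIV. \<theta> * h a True + (1 - \<theta>) * h a False)"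
  unfolding pattern_expectation_def pattern_weight_def
  using sum_bool_funs_prod[of "\<lambda>a v. (if v then \<theta> else 1 - \<theta>) * h a v"] by (simp add: prod.distrib)

lemma pattern_expectation_of_bool:
  "pattern_expectation \<theta> (\<lambda>\<beta>::'a::finite \<Rightarrow> bool. of_bool (\<beta> a)) = \<theta>"
proof -
  have "pattern_expectation \<theta> (\<lambda>\<beta>::'a \<Rightarrow> bool. \<Prod>x\<in>UNIV. if x = a then of_bool (\<beta> x) else 1) =
      (\<Prod>x\<in>UNIV. if x = a then \<theta> else 1)"
    by (subst pattern_expectation_prod) (intro prod.cong refl, auto)
  then show ?thesis
    by (simp add: prod.delta)
qed

lemma pattern_expectation_of_bool_pair:
  assumes "a \<noteq> a'"
  shows "pattern_expectation \<theta> (\<lambda>\<beta>::'a::finite \<Rightarrow> bool. of_bool (\<beta> a) * of_bool (\<not> \<beta> a')) = \<theta> * (1 - \<theta>)"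
proof -
  let ?h = "\<lambda>x v. (if x = a then of_bool v else 1) * (if x = a' then of_bool (\<not> v) else 1 :: real)"
  have "pattern_expectation \<theta> (\<lambda>\<beta>::'a \<Rightarrow> bool. \<Prod>x\<in>UNIV. ?h x (\<beta> x)) =
      (\<Prod>x\<in>UNIV. (if x = a then \<theta> else 1) * (if x = a' then 1 - \<theta> else 1))"
    by (subst pattern_expectation_prod) (intro prod.cong refl, use assms in auto)
  then show ?thesis
    by (simp add: prod.distrib prod.delta)
qed

lemma pattern_expectation_masked_mass:
  "pattern_expectation \<theta> (masked_mass w e) = \<theta> * sum w UNIV"
proof -
  have "pattern_expectation \<theta> (masked_mass w e) =
      (\<Sum>k\<in>UNIV. w k * pattern_expectation \<theta> (\<lambda>\<beta>. of_bool (\<beta> (e k))))"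
    unfolding masked_mass_def[abs_def] by (simp only: pattern_expectation_sum pattern_expectation_cmult)
  then show ?thesis
    by (simp add: pattern_expectation_of_bool sum_distrib_left mult.commute)
qed

section \<open>Absolute moments of Gaussian linear forms\<close>

lemma Gamma_nat_plus_half: "Gamma (real k + 1/2) = fact (2 * k) / (4 ^ k * fact k) * sqrt pi"
proof (induction k)
  case 0
  then show ?case by (simp add: Gamma_one_half_real)
next
  case (Suc k)
  have "real k + 1/2 \<notin> \<int>\<^sub>\<le>\<^sub>0"
    using nonpos_Ints_nonpos by force
  then have "Gamma (real (Suc k) + 1/2) = (real k + 1/2) * Gamma (real k + 1/2)"
    using Gamma_plus1[of "real k + 1/2"] by (simp add: algebra_simps)
  also have "\<dots> = (real k + 1/2) * (fact (2 * k) / (4 ^ k * fact k) * sqrt pi)"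
    by (simp add: Suc)
  also have "\<dots> = fact (2 * Suc k) / (4 ^ Suc k * fact (Suc k)) * sqrt pi"
  proof -
    have f: "fact (2 * Suc k) = (2 * real k + 2) * (2 * real k + 1) * (fact (2 * k) :: real)"
      by (simp add: fact_Suc algebra_simps)
    have "fact (2 * Suc k) / (4 ^ Suc k * fact (Suc k)) =
        ((2 * real k + 2) * (2 * real k + 1) / (4 * (real k + 1))) * (fact (2 * k) / (4 ^ k * fact k))"
      unfolding f by (simp add: fact_Suc field_simps)
    also have "(2 * real k + 2) * (2 * real k + 1) / (4 * (real k + 1)) = real k + 1/2"
      by (simp add: field_simps)
    finally show ?thesis by simp
  qed
  finally show ?case .
qed

lemma gamma_p_even: "gamma_p (2 * k) = fact (2 * k) / (2 ^ k * fact k)"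
proof -
  have "Gamma ((real (2 * k) + 1) / 2) = Gamma (real k + 1/2)"
    by (rule arg_cong[where f = Gamma]) simp
  then have "gamma_p (2 * k) = 2 ^ k * Gamma (real k + 1/2) / sqrt pi"
    unfolding gamma_p_def by (simp add: powr_realpow)
  also have "\<dots> = fact (2 * k) / (2 ^ k * fact k)"
    by (subst Gamma_nat_plus_half) (simp add: field_simps flip: power_mult_distrib)
  finally show ?thesis .
qed

lemma gamma_p_odd: "gamma_p (2 * k + 1) = 2 ^ k * fact k * sqrt (2 / pi)"
proof -
  have "2 powr (real (2 * k + 1) / 2) = 2 ^ k * sqrt 2"
    by (simp add: powr_add add_divide_distrib powr_realpow powr_half_sqrt)
  moreover have "Gamma ((real (2 * k + 1) + 1) / 2) = Gamma (1 + of_nat k)"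
    by (rule arg_cong[where f = Gamma]) simp
  ultimately show ?thesis
    unfolding gamma_p_def using Gamma_fact[of k] by (simp add: real_sqrt_divide)
qed

lemma gamma_p_pos: "0 < gamma_p p"
  unfolding gamma_p_def by (intro divide_pos_pos mult_pos_pos) auto

lemma has_bochner_integral_normal_abs_moment:
  assumes "0 < \<sigma>"
  shows "has_bochner_integral lborel (\<lambda>x. normal_density 0 \<sigma> x * \<bar>x\<bar> ^ p) (gamma_p p * \<sigma> ^ p)"
proof (cases "even p")
  case True
  then obtain k where p: "p = 2 * k" by (auto elim: evenE)
  have "gamma_p p * \<sigma> ^ p = fact (2 * k) / (2 ^ k * fact k) * (\<sigma>\<^sup>2) ^ k"
    by (simp only: p gamma_p_even power_mult)
  then have "fact (2 * k) / ((2 / \<sigma>\<^sup>2) ^ k * fact k) = gamma_p p * \<sigma> ^ p"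
    using assms by (simp add: power_divide field_simps)
  then show ?thesis
    using normal_moment_even[of \<sigma> 0 k] assms by (simp add: p power_even_abs)
next
  case False
  then obtain k where p: "p = 2 * k + 1" by (auto elim: oddE)
  have "has_bochner_integral lborel (\<lambda>x. normal_density 0 \<sigma> x * \<bar>x - 0\<bar> ^ (2 * k + 1))
      (2 ^ k * \<sigma> ^ (2 * k + 1) * fact k * sqrt (2 / pi))"
    using normal_moment_abs_odd[of \<sigma> 0 k] assms by simp
  moreover have "2 ^ k * \<sigma> ^ (2 * k + 1) * fact k * sqrt (2 / pi) = gamma_p (2 * k + 1) * \<sigma> ^ (2 * k + 1)"
    by (simp only: gamma_p_odd) (simp add: mult_ac)
  ultimately show ?thesis
    unfolding p by (simp only: diff_zero)
qed

lemma prob_space_gaussian_vector: "prob_space (gaussian_vector :: ('a::finite \<Rightarrow> real) measure)"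
  unfolding gaussian_vector_def by (rule prob_space_PiM) (rule prob_space_std_gaussian)

lemma sets_gaussian_vector:
  "sets (gaussian_vector :: ('a::finite \<Rightarrow> real) measure) = sets (PiM UNIV (\<lambda>_::'a. borel))"
  unfolding gaussian_vector_def by (rule sets_PiM_cong) auto

lemma distr_gaussian_vector_component:
  "distr (gaussian_vector :: ('a::finite \<Rightarrow> real) measure) borel (\<lambda>\<gamma>. \<gamma> a) = std_gaussian"
proof -
  have "distr (gaussian_vector :: ('a \<Rightarrow> real) measure) borel (\<lambda>\<gamma>. \<gamma> a) =
      distr gaussian_vector std_gaussian (\<lambda>\<gamma>. \<gamma> a)"
    by (rule distr_cong) auto
  also have "\<dots> = std_gaussian"
    unfolding gaussian_vector_def by (rule distr_PiM_component) (auto intro: prob_space_std_gaussian)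
  finally show ?thesis .
qed

lemma distributed_gaussian_vector_component:
  "distributed (gaussian_vector :: ('a::finite \<Rightarrow> real) measure) lborel (\<lambda>\<gamma>. \<gamma> a) (normal_density 0 1)"
proof -
  have "distr (gaussian_vector :: ('a \<Rightarrow> real) measure) lborel (\<lambda>\<gamma>. \<gamma> a) =
      distr gaussian_vector borel (\<lambda>\<gamma>. \<gamma> a)"
    by (rule distr_cong) auto
  then show ?thesis
    unfolding distributed_def
    by (simp add: distr_gaussian_vector_component std_gaussian_def measurable_cong_sets[OF sets_gaussian_vector refl])
qed

lemma indep_vars_gaussian_vector:
  "prob_space.indep_vars (gaussian_vector :: ('a::finite \<Rightarrow> real) measure) (\<lambda>_. borel) (\<lambda>a \<gamma>. \<gamma> a) UNIV"
proof -
  interpret prob_space "gaussian_vector :: ('a \<Rightarrow> real) measure"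
    by (rule prob_space_gaussian_vector)
  have rv: "random_variable borel (\<lambda>\<gamma>::'a \<Rightarrow> real. \<gamma> a)" for a
    by (simp add: measurable_cong_sets[OF sets_gaussian_vector refl])
  have "distr gaussian_vector (PiM UNIV (\<lambda>_::'a. borel)) (\<lambda>x. \<lambda>i\<in>UNIV. x i) =
      distr gaussian_vector (PiM UNIV (\<lambda>_::'a. borel)) (\<lambda>x. x)"
    by (rule distr_cong) auto
  also have "\<dots> = gaussian_vector"
    by (rule distr_id2) (rule sets_gaussian_vector[symmetric])
  also have "\<dots> = PiM UNIV (\<lambda>i. distr gaussian_vector borel (\<lambda>x. x i))"
    unfolding distr_gaussian_vector_component unfolding gaussian_vector_def ..
  finally show ?thesis
    by (subst indep_vars_iff_distr_eq_PiM) (use rv in auto)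
qed

lemma nn_integral_gaussian_linear_form:
  fixes c :: "'a::finite \<Rightarrow> real"
  assumes "0 < p"
  shows "(\<integral>\<^sup>+\<gamma>. ennreal (\<bar>\<Sum>a\<in>UNIV. c a * \<gamma> a\<bar> ^ p) \<partial>gaussian_vector) =
    ennreal (gamma_p p * sqrt (\<Sum>a\<in>UNIV. (c a)\<^sup>2) ^ p)"
proof (cases "\<forall>a. c a = 0")
  case True
  then show ?thesis using assms by (simp add: zero_power)
next
  case False
  interpret prob_space "gaussian_vector :: ('a \<Rightarrow> real) measure"
    by (rule prob_space_gaussian_vector)
  define I where "I = {a. c a \<noteq> 0}"
  define \<sigma> where "\<sigma> = sqrt (\<Sum>a\<in>UNIV. (c a)\<^sup>2)"
  have I: "finite I" "I \<noteq> {}"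
    using False by (auto simp: I_def)
  have "indep_vars (\<lambda>_. borel) (\<lambda>a \<gamma>. c a * \<gamma> a) I"
    by (rule indep_vars_compose2[OF indep_vars_subset[OF indep_vars_gaussian_vector], where Y="\<lambda>a x. c a * x"]) auto
  moreover have "distributed gaussian_vector lborel (\<lambda>\<gamma>. c a * \<gamma> a) (normal_density 0 \<bar>c a\<bar>)" if "a \<in> I" for a
    using normal_density_affine[OF distributed_gaussian_vector_component, of "c a" 0] that by (simp add: I_def)
  ultimately have "distributed gaussian_vector lborel (\<lambda>\<gamma>. \<Sum>a\<in>I. c a * \<gamma> a)
      (normal_density (\<Sum>a\<in>I. 0) (sqrt (\<Sum>a\<in>I. \<bar>c a\<bar>\<^sup>2)))"
    by (intro sum_indep_normal[OF I]) (auto simp: I_def)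
  moreover have "(\<lambda>\<gamma>. \<Sum>a\<in>I. c a * \<gamma> a) = (\<lambda>\<gamma>. \<Sum>a\<in>UNIV. c a * \<gamma> a)"
    by (intro ext sum.mono_neutral_left) (auto simp: I_def)
  moreover have "(\<Sum>a\<in>I. \<bar>c a\<bar>\<^sup>2) = (\<Sum>a\<in>UNIV. (c a)\<^sup>2)"
    by (simp, intro sum.mono_neutral_left) (auto simp: I_def)
  ultimately have D: "distributed gaussian_vector lborel (\<lambda>\<gamma>. \<Sum>a\<in>UNIV. c a * \<gamma> a) (normal_density 0 \<sigma>)"
    by (simp add: \<sigma>_def)
  from False obtain a0 where "c a0 \<noteq> 0" by auto
  then have "0 < \<sigma>"
    unfolding \<sigma>_def by (intro real_sqrt_gt_zero sum_pos2[of UNIV a0]) auto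
  then have "has_bochner_integral lborel (\<lambda>x. normal_density 0 \<sigma> x * \<bar>x\<bar> ^ p) (gamma_p p * \<sigma> ^ p)"
    by (rule has_bochner_integral_normal_abs_moment)
  then have "(\<integral>\<^sup>+x. ennreal (normal_density 0 \<sigma> x * \<bar>x\<bar> ^ p) \<partial>lborel) = ennreal (gamma_p p * \<sigma> ^ p)"
    by (subst nn_integral_eq_integral) (auto simp: has_bochner_integral_iff)
  then show ?thesis
    using distributed_nn_integral[OF D, of "\<lambda>x. ennreal (\<bar>x\<bar> ^ p)"] by (simp add: \<sigma>_def ennreal_mult)
qed

lemma sum_UNIV_prod_column:
  fixes h :: "'n::finite \<Rightarrow> 'b::comm_monoid_add"
  shows "(\<Sum>a\<in>(UNIV::('n \<times> 'r::finite) set). if snd a = j then h (fst a) else 0) = (\<Sum>k\<in>UNIV. h k)"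
proof -
  have "(\<Sum>a\<in>(UNIV::('n \<times> 'r) set). if snd a = j then h (fst a) else 0) =
      (\<Sum>k\<in>UNIV. \<Sum>j'\<in>UNIV. if j' = j then h k else 0)"
    by (subst sum.cartesian_product) (simp add: UNIV_Times_UNIV case_prod_beta)
  then show ?thesis by simp
qed

lemma nn_integral_masked_column:
  fixes q :: "'n::finite \<Rightarrow> real" and j :: "'r::finite" and \<beta> :: "'n \<times> 'r \<Rightarrow> bool"
  assumes "0 < p"
  shows "(\<integral>\<^sup>+\<gamma>. ennreal (\<bar>\<Sum>k\<in>UNIV. q k * masked (\<beta>, \<gamma>) (k, j)\<bar> ^ p) \<partial>gaussian_vector) =
    ennreal (gamma_p p * sqrt (masked_mass (\<lambda>k. (q k)\<^sup>2) (\<lambda>k. (k, j)) \<beta>) ^ p)"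
proof -
  define c where "c a = (if snd a = j then q (fst a) * of_bool (\<beta> a) else 0)" for a :: "'n \<times> 'r"
  have "(\<Sum>a\<in>UNIV. c a * \<gamma> a) = (\<Sum>k\<in>UNIV. q k * masked (\<beta>, \<gamma>) (k, j))" for \<gamma>
  proof -
    have "(\<Sum>a\<in>UNIV. c a * \<gamma> a) = (\<Sum>a\<in>(UNIV::('n \<times> 'r) set).
        if snd a = j then q (fst a) * of_bool (\<beta> (fst a, j)) * \<gamma> (fst a, j) else 0)"
      by (intro sum.cong) (auto simp: c_def)
    also have "\<dots> = (\<Sum>k\<in>UNIV. q k * of_bool (\<beta> (k, j)) * \<gamma> (k, j))"
      by (rule sum_UNIV_prod_column)
    finally show ?thesis
      by (simp add: masked_def mult.assoc)
  qed
  moreover have "(\<Sum>a\<in>UNIV. (c a)\<^sup>2) = masked_mass (\<lambda>k. (q k)\<^sup>2) (\<lambda>k. (k, j)) \<beta>"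
  proof -
    have "(\<Sum>a\<in>UNIV. (c a)\<^sup>2) = (\<Sum>a\<in>(UNIV::('n \<times> 'r) set).
        if snd a = j then (q (fst a))\<^sup>2 * of_bool (\<beta> (fst a, j)) else 0)"
      by (intro sum.cong) (auto simp: c_def power_mult_distrib)
    also have "\<dots> = masked_mass (\<lambda>k. (q k)\<^sup>2) (\<lambda>k. (k, j)) \<beta>"
      unfolding masked_mass_def by (rule sum_UNIV_prod_column)
    finally show ?thesis .
  qed
  ultimately show ?thesis
    using nn_integral_gaussian_linear_form[OF assms, of c] by simp
qed

lemma has_bochner_integral_BG_matrix_entry:
  fixes q :: "'n::finite \<Rightarrow> real" and j :: "'r::finite"
  assumes "0 \<le> \<theta>" "\<theta> \<le> 1" "0 < p"
  shows "has_bochner_integral (BG_matrix \<theta>) (\<lambda>x. \<bar>\<Sum>k\<in>UNIV. q k * x (k, j)\<bar> ^ p)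
    (gamma_p p * pattern_expectation \<theta> (\<lambda>\<beta>. sqrt (masked_mass (\<lambda>k. (q k)\<^sup>2) (\<lambda>k. (k, j)) \<beta>) ^ p))"
proof -
  let ?s = "\<lambda>\<beta>. sqrt (masked_mass (\<lambda>k. (q k)\<^sup>2) (\<lambda>k. (k, j)) \<beta>) ^ p"
  have [measurable]: "(\<lambda>x. x a) \<in> borel_measurable (PiM UNIV (\<lambda>_::'n \<times> 'r. borel :: real measure))" for a
    by (rule measurable_component_singleton) simp
  have f: "(\<lambda>x. \<bar>\<Sum>k\<in>UNIV. q k * x (k, j)\<bar> ^ p) \<in> borel_measurable (PiM UNIV (\<lambda>_::'n \<times> 'r. borel))"
    by measurable
  have sets_eq: "sets (BG_matrix \<theta> :: ('n \<times> 'r \<Rightarrow> real) measure) = sets (PiM UNIV (\<lambda>_::'n \<times> 'r. borel))"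
    unfolding BG_matrix_def by (rule sets_PiM_cong) auto
  have m: "(\<lambda>x. \<bar>\<Sum>k\<in>UNIV. q k * x (k, j)\<bar> ^ p) \<in> borel_measurable (BG_matrix \<theta>)"
    using f by (simp only: measurable_cong_sets[OF sets_eq refl])
  have s: "0 \<le> ?s \<beta>" for \<beta>
    by (simp add: masked_mass_nonneg)
  have "(\<integral>\<^sup>+x. ennreal (\<bar>\<Sum>k\<in>UNIV. q k * x (k, j)\<bar> ^ p) \<partial>BG_matrix \<theta>) =
      (\<Sum>\<beta>\<in>UNIV. ennreal (pattern_weight \<theta> \<beta>) * ennreal (gamma_p p * ?s \<beta>))"
    unfolding BG_matrix_def using f
    by (simp add: nn_integral_PiM_BG[OF assms(1,2)] nn_integral_masked_column[OF assms(3)])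
  also have "\<dots> = (\<Sum>\<beta>\<in>UNIV. ennreal (gamma_p p * (pattern_weight \<theta> \<beta> * ?s \<beta>)))"
    using assms gamma_p_pos[of p] s
    by (intro sum.cong refl) (simp add: ennreal_mult'[symmetric] pattern_weight_nonneg mult_ac)
  also have "\<dots> = ennreal (gamma_p p * pattern_expectation \<theta> ?s)"
    using assms gamma_p_pos[of p] s
    by (subst sum_ennreal) (auto simp: pattern_expectation_def sum_distrib_left pattern_weight_nonneg)
  moreover have "0 \<le> pattern_expectation \<theta> ?s"
    using assms s by (intro pattern_expectation_nonneg)
  ultimately show ?thesis
    using gamma_p_pos[of p] m by (intro has_bochner_integral_nn_integral) auto
qed

lemma integral_entry_pnorm_pow_BG_matrix:
  fixes Q :: "real^'n::finite^'n"
  assumes "0 \<le> \<theta>" "\<theta> \<le> 1" "0 < p"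
  shows "(\<integral>x. entry_pnorm_pow p (Q ** (mat_of_entries x :: real^'r::finite^'n)) \<partial>BG_matrix \<theta>) =
    gamma_p p * (\<Sum>i\<in>UNIV. \<Sum>j\<in>(UNIV::'r set).
      pattern_expectation \<theta> (\<lambda>\<beta>. sqrt (masked_mass (\<lambda>k. (Q$i$k)\<^sup>2) (\<lambda>k. (k, j)) \<beta>) ^ p))"
proof -
  have "has_bochner_integral (BG_matrix \<theta>) (\<lambda>x. \<Sum>i\<in>UNIV. \<Sum>j\<in>(UNIV::'r set). \<bar>\<Sum>k\<in>UNIV. Q$i$k * x (k, j)\<bar> ^ p)
      (\<Sum>i\<in>UNIV. \<Sum>j\<in>(UNIV::'r set).
        gamma_p p * pattern_expectation \<theta> (\<lambda>\<beta>. sqrt (masked_mass (\<lambda>k. (Q$i$k)\<^sup>2) (\<lambda>k. (k, j)) \<beta>) ^ p))"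
    by (intro has_bochner_integral_sum has_bochner_integral_BG_matrix_entry assms)
  then show ?thesis
    by (simp add: entry_pnorm_pow_def matrix_matrix_mult_def mat_of_entries_def
        has_bochner_integral_integral_eq sum_distrib_left)
qed

section \<open>The deficit \<open>t - t^(p/2)\<close> of a masked mass\<close>

definition kappa_p :: "nat \<Rightarrow> real" where
  "kappa_p p = 1 - 2 * sqrt (1/2) ^ p"

lemma kappa_p_nonneg: "2 \<le> p \<Longrightarrow> 0 \<le> kappa_p p"
proof -
  assume "2 \<le> p"
  then have "sqrt (1/2::real) ^ p \<le> sqrt (1/2) ^ 2"
    by (intro power_decreasing) auto
  then show ?thesis
    by (simp add: kappa_p_def)
qed

lemma C_p_eq: "C_p p = 1 / kappa_p p"
proof -
  have "sqrt (1/2::real) ^ p = ((1/2) powr (1/2)) powr real p"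
    by (simp add: powr_half_sqrt powr_realpow)
  also have "\<dots> = (1/2) powr (real p / 2)"
    by (simp add: powr_powr)
  finally show ?thesis
    by (simp add: C_p_def kappa_p_def)
qed

lemma kappa_p_min_le_gap:
  fixes t :: real
  assumes "0 \<le> t" "t \<le> 1" "2 \<le> p"
  shows "kappa_p p * min t (1 - t) \<le> t - sqrt t ^ p"
proof (cases "t \<le> 1/2")
  case True
  \<comment> \<open>\<open>t^(p/2) = t * t^((p-2)/2) \<le> t * (1/2)^((p-2)/2)\<close>\<close>
  have p: "p = 2 + (p - 2)"
    using assms by simp
  have "sqrt t ^ p = t * sqrt t ^ (p - 2)"
    using assms by (subst p) (simp add: power_add)
  also have "\<dots> \<le> t * sqrt (1/2) ^ (p - 2)"
    using True assms by (intro mult_left_mono power_mono) auto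
  also have "sqrt (1/2::real) ^ (p - 2) = 2 * sqrt (1/2) ^ p"
    by (subst (2) p) (simp add: power_add)
  finally show ?thesis
    using True by (simp add: kappa_p_def algebra_simps)
next
  case False
  \<comment> \<open>convexity of \<open>x^(p/2)\<close> on the chord from \<open>1/2\<close> to \<open>1\<close>\<close>
  define u where "u = 2 * t - 1"
  have u: "0 \<le> u" "u \<le> 1"
    using False assms by (auto simp: u_def)
  have sqrt_pow: "x powr (real p / 2) = sqrt x ^ p" if "0 < x" for x :: real
    using that by (simp add: powr_half_sqrt[symmetric] powr_realpow[symmetric] powr_powr)
  have "convex_on {0<..} (\<lambda>x::real. x powr (real p / 2))"
    by (rule powr_convex) (use assms in simp)
  moreover have "t = (1 - u) *\<^sub>R (1/2) + u *\<^sub>R 1"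
    by (simp add: u_def algebra_simps)
  ultimately have "t powr (real p / 2) \<le> (1 - u) * (1/2) powr (real p / 2) + u * 1 powr (real p / 2)"
    using u by (metis convex_onD greaterThan_iff zero_less_one half_gt_zero)
  then have "sqrt t ^ p \<le> (1 - u) * sqrt (1/2) ^ p + u"
    using False by (simp add: sqrt_pow)
  then show ?thesis
    using False by (simp add: kappa_p_def u_def algebra_simps)
qed

definition cut_weight :: "('k::finite \<Rightarrow> 'k \<Rightarrow> real) \<Rightarrow> ('k \<Rightarrow> 'a) \<Rightarrow> ('a \<Rightarrow> bool) \<Rightarrow> real" where
  "cut_weight c e \<beta> = (\<Sum>k\<in>UNIV. \<Sum>l\<in>UNIV. c k l * (of_bool (\<beta> (e k)) * of_bool (\<not> \<beta> (e l))))"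

lemma cut_weight_le_masked_mass:
  assumes "\<And>k l. 0 \<le> c k l" "\<And>k. (\<Sum>l\<in>UNIV. c k l) \<le> w k"
  shows "cut_weight c e \<beta> \<le> masked_mass w e \<beta>"
proof -
  have "cut_weight c e \<beta> \<le> (\<Sum>k\<in>UNIV. (\<Sum>l\<in>UNIV. c k l) * of_bool (\<beta> (e k)))"
    unfolding cut_weight_def sum_distrib_right by (intro sum_mono mult_left_mono) (auto simp: assms)
  also have "\<dots> \<le> masked_mass w e \<beta>"
    unfolding masked_mass_def by (intro sum_mono mult_right_mono assms) simp
  finally show ?thesis .
qed

lemma cut_weight_le_one_minus_masked_mass:
  assumes "\<And>k l. 0 \<le> c k l" "\<And>k l. c k l = c l k" "\<And>k. (\<Sum>l\<in>UNIV. c k l) \<le> w k" "sum w UNIV = 1"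
  shows "cut_weight c e \<beta> \<le> 1 - masked_mass w e \<beta>"
proof -
  have "cut_weight c e \<beta> \<le> (\<Sum>l\<in>UNIV. (\<Sum>k\<in>UNIV. c l k) * of_bool (\<not> \<beta> (e l)))"
    unfolding cut_weight_def sum_distrib_right
    by (subst sum.swap) (intro sum_mono mult_left_mono, auto simp: assms(1) assms(2)[of _ l for l])
  also have "\<dots> \<le> (\<Sum>l\<in>UNIV. w l * of_bool (\<not> \<beta> (e l)))"
    by (intro sum_mono mult_right_mono assms) simp
  also have "\<dots> = 1 - masked_mass w e \<beta>"
    using assms(4) by (simp add: masked_mass_def of_bool_not_iff right_diff_distrib sum_subtractf)
  finally show ?thesis .
qed

lemma pattern_expectation_cut_weight:
  assumes "inj e" "\<And>k. c k k = 0"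
  shows "pattern_expectation \<theta> (cut_weight c e) = \<theta> * (1 - \<theta>) * (\<Sum>k\<in>UNIV. \<Sum>l\<in>UNIV. c k l)"
proof -
  have "pattern_expectation \<theta> (cut_weight c e) = (\<Sum>k\<in>UNIV. \<Sum>l\<in>UNIV. c k l *
      pattern_expectation \<theta> (\<lambda>\<beta>. of_bool (\<beta> (e k)) * of_bool (\<not> \<beta> (e l))))"
    unfolding cut_weight_def[abs_def] by (simp only: pattern_expectation_sum pattern_expectation_cmult)
  also have "\<dots> = (\<Sum>k\<in>UNIV. \<Sum>l\<in>UNIV. c k l * (\<theta> * (1 - \<theta>)))"
  proof (intro sum.cong refl)
    fix k l
    show "c k l * pattern_expectation \<theta> (\<lambda>\<beta>. of_bool (\<beta> (e k)) * of_bool (\<not> \<beta> (e l))) =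
        c k l * (\<theta> * (1 - \<theta>))"
      using assms by (cases "k = l") (simp_all add: pattern_expectation_of_bool_pair inj_eq)
  qed
  finally show ?thesis
    by (simp add: sum_distrib_left sum_distrib_right mult_ac)
qed

lemma pattern_expectation_min_mass_ge:
  fixes w :: "'k::finite \<Rightarrow> real" and c :: "'k \<Rightarrow> 'k \<Rightarrow> real" and e :: "'k \<Rightarrow> 'a::finite"
  assumes "0 \<le> \<theta>" "\<theta> \<le> 1" "inj e" "sum w UNIV = 1"
    and c: "\<And>k l. 0 \<le> c k l" "\<And>k l. c k l = c l k" "\<And>k. c k k = 0" "\<And>k. (\<Sum>l\<in>UNIV. c k l) \<le> w k"
  shows "\<theta> * (1 - \<theta>) * (\<Sum>k\<in>UNIV. \<Sum>l\<in>UNIV. c k l) \<le>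
    pattern_expectation \<theta> (\<lambda>\<beta>. min (masked_mass w e \<beta>) (1 - masked_mass w e \<beta>))"
proof -
  have cut: "cut_weight c e \<beta> \<le> min (masked_mass w e \<beta>) (1 - masked_mass w e \<beta>)" for \<beta>
    using assms by (simp add: cut_weight_le_masked_mass cut_weight_le_one_minus_masked_mass)
  have "pattern_expectation \<theta> (cut_weight c e) \<le>
      pattern_expectation \<theta> (\<lambda>\<beta>. min (masked_mass w e \<beta>) (1 - masked_mass w e \<beta>))"
    using assms(1,2) cut by (rule pattern_expectation_mono)
  then show ?thesis
    using assms(3) c(3) by (simp add: pattern_expectation_cut_weight)
qed

lemma pattern_expectation_mass_gap_ge_pairs:
  fixes w :: "'k::finite \<Rightarrow> real" and c :: "'k \<Rightarrow> 'k \<Rightarrow> real" and e :: "'k \<Rightarrow> 'a::finite"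
  assumes "0 \<le> \<theta>" "\<theta> \<le> 1" "inj e" "\<And>k. 0 \<le> w k" "sum w UNIV = 1" "2 \<le> p"
    and "\<And>k l. 0 \<le> c k l" "\<And>k l. c k l = c l k" "\<And>k. c k k = 0" "\<And>k. (\<Sum>l\<in>UNIV. c k l) \<le> w k"
  shows "kappa_p p * (\<theta> * (1 - \<theta>) * (\<Sum>k\<in>UNIV. \<Sum>l\<in>UNIV. c k l)) \<le>
    pattern_expectation \<theta> (\<lambda>\<beta>. masked_mass w e \<beta> - sqrt (masked_mass w e \<beta>) ^ p)"
proof -
  have "kappa_p p * (\<theta> * (1 - \<theta>) * (\<Sum>k\<in>UNIV. \<Sum>l\<in>UNIV. c k l)) \<le>
      kappa_p p * pattern_expectation \<theta> (\<lambda>\<beta>. min (masked_mass w e \<beta>) (1 - masked_mass w e \<beta>))"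
    using assms by (intro mult_left_mono pattern_expectation_min_mass_ge kappa_p_nonneg)
  also have "\<dots> = pattern_expectation \<theta> (\<lambda>\<beta>. kappa_p p * min (masked_mass w e \<beta>) (1 - masked_mass w e \<beta>))"
    by (rule pattern_expectation_cmult[symmetric])
  also have "\<dots> \<le> pattern_expectation \<theta> (\<lambda>\<beta>. masked_mass w e \<beta> - sqrt (masked_mass w e \<beta>) ^ p)"
    using assms by (intro pattern_expectation_mono kappa_p_min_le_gap masked_mass_nonneg masked_mass_le_1)
  finally show ?thesis .
qed

lemma pattern_expectation_mass_gap_dominant:
  fixes w :: "'k::finite \<Rightarrow> real" and e :: "'k \<Rightarrow> 'a::finite"
  assumes "0 \<le> \<theta>" "\<theta> \<le> 1" "inj e" and w: "\<And>k. 0 \<le> w k" "sum w UNIV = 1" and "2 \<le> p"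
    and "1/2 < w k0"
  shows "kappa_p p * (\<theta> * (1 - \<theta>) * (1 - w k0)) \<le>
    pattern_expectation \<theta> (\<lambda>\<beta>. masked_mass w e \<beta> - sqrt (masked_mass w e \<beta>) ^ p)"
proof -
  define c where "c k l = (if k = l then 0 else w k * w l)" for k l
  have rows: "(\<Sum>l\<in>UNIV. c k l) = w k - (w k)\<^sup>2" for k
  proof -
    have "(\<Sum>l\<in>UNIV. c k l) = (\<Sum>l\<in>UNIV. w k * w l) - w k * w k"
      by (simp add: c_def sum.If_cases Diff_eq[symmetric] sum_diff1 mult.commute)
    then show ?thesis
      by (simp add: sum_distrib_left[symmetric] w power2_eq_square)
  qed
  have "w k \<le> w k0" for k
  proof (cases "k = k0")
    case False
    then have "w k + w k0 \<le> sum w UNIV"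
      using sum_mono2[of UNIV "{k, k0}" w] w by simp
    then show ?thesis
      using w \<open>1/2 < w k0\<close> by simp
  qed simp
  then have "(\<Sum>k\<in>UNIV. (w k)\<^sup>2) \<le> (\<Sum>k\<in>UNIV. w k * w k0)"
    by (intro sum_mono) (simp add: power2_eq_square mult_left_mono w)
  then have "1 - w k0 \<le> (\<Sum>k\<in>UNIV. \<Sum>l\<in>UNIV. c k l)"
    by (simp add: rows sum_subtractf w sum_distrib_right[symmetric])
  then have "kappa_p p * (\<theta> * (1 - \<theta>) * (1 - w k0)) \<le> kappa_p p * (\<theta> * (1 - \<theta>) * (\<Sum>k\<in>UNIV. \<Sum>l\<in>UNIV. c k l))"
    using assms by (intro mult_left_mono kappa_p_nonneg) auto
  also have "\<dots> \<le> pattern_expectation \<theta> (\<lambda>\<beta>. masked_mass w e \<beta> - sqrt (masked_mass w e \<beta>) ^ p)"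
  proof (rule pattern_expectation_mass_gap_ge_pairs[OF assms(1-6)])
    show "0 \<le> c k l" "c k l = c l k" "c k k = 0" for k l
      by (auto simp: c_def w)
    show "(\<Sum>l\<in>UNIV. c k l) \<le> w k" for k
      by (simp add: rows)
  qed
  finally show ?thesis .
qed

lemma exists_symmetric_weights_star:
  fixes w :: "'k::finite \<Rightarrow> real"
  assumes w0: "\<And>k. 0 \<le> w k" and w1: "sum w UNIV = 1" and k0: "w k0 = 1/2"
  obtains c :: "'k \<Rightarrow> 'k \<Rightarrow> real"
  where "\<And>k l. 0 \<le> c k l" "\<And>k l. c k l = c l k" "\<And>k. c k k = 0" "\<And>k. (\<Sum>l\<in>UNIV. c k l) = w k"
proof -
  define c where "c k l = (if k = k0 \<and> l \<noteq> k0 then w l else if l = k0 \<and> k \<noteq> k0 then w k else 0)" for k l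
  have rows: "(\<Sum>l\<in>UNIV. c k l) = w k" for k
  proof (cases "k = k0")
    case True
    moreover have "{l. l \<noteq> k0} = UNIV - {k0}"
      by blast
    ultimately have "(\<Sum>l\<in>UNIV. c k l) = sum w (UNIV - {k0})"
      by (simp add: c_def sum.If_cases)
    then show ?thesis
      using True k0 w1 by (simp add: sum_diff1)
  next
    case False
    then show ?thesis
      by (simp add: c_def sum.If_cases)
  qed
  show ?thesis
    by (rule that[OF _ _ _ rows]) (auto simp: c_def w0)
qed

lemma exists_symmetric_weights_lt_half:
  fixes w :: "'k::finite \<Rightarrow> real"
  assumes w0: "\<And>k. 0 \<le> w k" and w1: "sum w UNIV = 1" and wh: "\<And>k. w k < 1/2"
  obtains c :: "'k \<Rightarrow> 'k \<Rightarrow> real"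
  where "\<And>k l. 0 \<le> c k l" "\<And>k l. c k l = c l k" "\<And>k. c k k = 0" "\<And>k. (\<Sum>l\<in>UNIV. c k l) = w k"
proof -
  have pos: "0 < 1 - 2 * w k" for k
    using wh[of k] by simp
  define A where "A = (\<Sum>k\<in>UNIV. w k / (1 - 2 * w k))"
  have A: "0 \<le> A"
    unfolding A_def using pos w0 by (intro sum_nonneg divide_nonneg_nonneg) (auto intro: less_imp_le)
  \<comment> \<open>\<open>c k l = w k * w l * (u k + u l)\<close> has row sums \<open>w k * (u k * (1 - 2 * w k) + sum_l w l * u l)\<close>,
    which this choice of \<open>u\<close> makes equal to \<open>w k\<close>\<close>
  define u where "u k = 1 / ((1 + A) * (1 - 2 * w k))" for k
  define c where "c k l = (if k = l then 0 else w k * w l * (u k + u l))" for k l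
  have u: "0 \<le> u k" "u k * (1 - 2 * w k) = 1 / (1 + A)" for k
    using A pos[of k] by (simp_all add: u_def)
  have "(\<Sum>l\<in>UNIV. w l * u l) = (\<Sum>l\<in>UNIV. w l / (1 - 2 * w l) / (1 + A))"
    by (intro sum.cong) (auto simp: u_def)
  then have U: "(\<Sum>l\<in>UNIV. w l * u l) = A / (1 + A)"
    unfolding A_def by (simp add: sum_divide_distrib)
  have rows: "(\<Sum>l\<in>UNIV. c k l) = w k" for k
  proof -
    have "(\<Sum>l\<in>UNIV. c k l) = (\<Sum>l\<in>UNIV. w k * w l * (u k + u l)) - w k * w k * (u k + u k)"
      by (simp add: c_def sum.If_cases Diff_eq[symmetric] sum_diff1)
    also have "\<dots> = w k * (u k * (1 - 2 * w k) + (\<Sum>l\<in>UNIV. w l * u l))"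
      by (simp add: algebra_simps sum.distrib sum_distrib_left flip: sum_distrib_right w1)
    also have "\<dots> = w k"
      using A by (simp add: u U add_divide_distrib[symmetric])
    finally show ?thesis .
  qed
  show ?thesis
    by (rule that[OF _ _ _ rows]) (auto simp: c_def w0 u intro!: mult_nonneg_nonneg add_nonneg_nonneg)
qed

lemma exists_symmetric_weights_with_row_sums:
  fixes w :: "'k::finite \<Rightarrow> real"
  assumes "\<And>k. 0 \<le> w k" "sum w UNIV = 1" "\<And>k. w k \<le> 1/2"
  obtains c :: "'k \<Rightarrow> 'k \<Rightarrow> real"
  where "\<And>k l. 0 \<le> c k l" "\<And>k l. c k l = c l k" "\<And>k. c k k = 0" "\<And>k. (\<Sum>l\<in>UNIV. c k l) = w k"
proof (cases "\<exists>k0. w k0 = 1/2")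
  case True
  then show ?thesis
    using exists_symmetric_weights_star[OF assms(1,2)] that by blast
next
  case False
  then have "w k < 1/2" for k
    using assms(3)[of k] order_le_neq_trans by blast
  then show ?thesis
    using exists_symmetric_weights_lt_half[OF assms(1,2)] that by blast
qed

lemma pattern_expectation_mass_gap_balanced:
  fixes w :: "'k::finite \<Rightarrow> real" and e :: "'k \<Rightarrow> 'a::finite"
  assumes "0 \<le> \<theta>" "\<theta> \<le> 1" "inj e" "\<And>k. 0 \<le> w k" "sum w UNIV = 1" "2 \<le> p"
    and "\<And>k. w k \<le> 1/2"
  shows "kappa_p p * (\<theta> * (1 - \<theta>)) \<le>
    pattern_expectation \<theta> (\<lambda>\<beta>. masked_mass w e \<beta> - sqrt (masked_mass w e \<beta>) ^ p)"
proof -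
  obtain c :: "'k \<Rightarrow> 'k \<Rightarrow> real"
    where c: "\<And>k l. 0 \<le> c k l" "\<And>k l. c k l = c l k" "\<And>k. c k k = 0" "\<And>k. (\<Sum>l\<in>UNIV. c k l) = w k"
    using exists_symmetric_weights_with_row_sums[of w] assms by blast
  have "(\<Sum>k\<in>UNIV. \<Sum>l\<in>UNIV. c k l) = 1"
    using c(4) assms(5) by simp
  then show ?thesis
    using pattern_expectation_mass_gap_ge_pairs[of \<theta> e w p c] assms c by simp
qed

lemma pattern_expectation_mass_gap_ge:
  fixes w :: "'k::finite \<Rightarrow> real" and e :: "'k \<Rightarrow> 'a::finite"
  assumes "0 \<le> \<theta>" "\<theta> \<le> 1" "inj e" "\<And>k. 0 \<le> w k" "sum w UNIV = 1" "2 \<le> p"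
    and dominant: "\<And>k. 1/2 < w k \<Longrightarrow> k = k0"
  shows "kappa_p p * (\<theta> * (1 - \<theta>) * (1 - w k0)) \<le>
    pattern_expectation \<theta> (\<lambda>\<beta>. masked_mass w e \<beta> - sqrt (masked_mass w e \<beta>) ^ p)"
proof (cases "1/2 < w k0")
  case True
  then show ?thesis
    using assms by (intro pattern_expectation_mass_gap_dominant)
next
  case False
  then have "w k \<le> 1/2" for k
    using dominant[of k] by (cases "1/2 < w k") auto
  then have "kappa_p p * (\<theta> * (1 - \<theta>)) \<le>
      pattern_expectation \<theta> (\<lambda>\<beta>. masked_mass w e \<beta> - sqrt (masked_mass w e \<beta>) ^ p)"
    using assms by (intro pattern_expectation_mass_gap_balanced) auto
  moreover have "kappa_p p * (\<theta> * (1 - \<theta>) * (1 - w k0)) \<le> kappa_p p * (\<theta> * (1 - \<theta>))"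
    using assms False kappa_p_nonneg[of p] by (intro mult_left_mono mult_right_le_one_le) auto
  ultimately show ?thesis
    by linarith
qed

section \<open>Orthogonal matrices and signed permutations\<close>

lemma orthogonal_matrix_row_sq_sum:
  fixes Q :: "real^'n::finite^'n"
  assumes "orthogonal_matrix Q"
  shows "(\<Sum>k\<in>UNIV. (Q$i$k)\<^sup>2) = 1"
proof -
  have "(Q ** transpose Q)$i$i = 1"
    using assms by (simp add: orthogonal_matrix_def mat_def)
  then show ?thesis
    by (simp add: matrix_matrix_mult_def transpose_def power2_eq_square)
qed

lemma orthogonal_matrix_col_sq_sum:
  fixes Q :: "real^'n::finite^'n"
  assumes "orthogonal_matrix Q"
  shows "(\<Sum>i\<in>UNIV. (Q$i$k)\<^sup>2) = 1"
proof -
  have "orthogonal_matrix (transpose Q)"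
    using assms by simp
  from orthogonal_matrix_row_sq_sum[OF this, of k] show ?thesis
    by (simp add: transpose_def)
qed

lemma unique_gt_half:
  fixes v :: "'k::finite \<Rightarrow> real"
  assumes "sum v UNIV = 1" "\<And>k. 0 \<le> v k" "1/2 < v a" "1/2 < v b"
  shows "a = b"
proof (rule ccontr)
  assume "a \<noteq> b"
  then have "v a + v b \<le> sum v UNIV"
    using sum_mono2[of UNIV "{a, b}" v] assms(2) by simp
  then show False
    using assms by simp
qed

lemma inj_on_extends_to_permutation:
  fixes f :: "'a::finite \<Rightarrow> 'a"
  assumes "inj_on f S"
  obtains \<sigma> where "\<sigma> permutes UNIV" "\<And>i. i \<in> S \<Longrightarrow> \<sigma> i = f i"
proof -
  have "card (UNIV - S) = card (UNIV - f ` S)"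
    using assms by (simp add: card_Diff_subset card_image)
  then obtain h where h: "bij_betw h (UNIV - S) (UNIV - f ` S)"
    using finite_same_card_bij[of "UNIV - S" "UNIV - f ` S"] by auto
  define \<sigma> where "\<sigma> i = (if i \<in> S then f i else h i)" for i
  have "bij_betw \<sigma> S (f ` S)"
    using inj_on_imp_bij_betw[OF assms] by (rule bij_betw_cong[THEN iffD1, rotated]) (simp add: \<sigma>_def)
  moreover have "bij_betw \<sigma> (UNIV - S) (UNIV - f ` S)"
    using h by (rule bij_betw_cong[THEN iffD1, rotated]) (simp add: \<sigma>_def)
  ultimately have "bij_betw \<sigma> (S \<union> (UNIV - S)) (f ` S \<union> (UNIV - f ` S))"
    by (rule bij_betw_combine) blast
  then have "\<sigma> permutes UNIV"
    by (intro bij_imp_permutes) simp_all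
  then show ?thesis
    by (rule that) (simp add: \<sigma>_def)
qed

text \<open>Since rows and columns of \<open>Q\<close> are unit vectors, each row and each column holds at most
  one entry with \<open>Q_ik^2 > 1/2\<close>.\<close>

lemma orthogonal_matrix_obtain_permutation_dominant:
  fixes Q :: "real^'n::finite^'n"
  assumes "orthogonal_matrix Q"
  obtains \<sigma> where "\<sigma> permutes UNIV" "\<And>i k. 1/2 < (Q$i$k)\<^sup>2 \<Longrightarrow> \<sigma> i = k"
proof -
  define S where "S = {i. \<exists>k. 1/2 < (Q$i$k)\<^sup>2}"
  define f where "f i = (SOME k. 1/2 < (Q$i$k)\<^sup>2)" for i
  have f: "1/2 < (Q$i$f i)\<^sup>2" if "i \<in> S" for i
    using that unfolding S_def f_def by (auto intro: someI_ex)
  have row: "k = l" if "1/2 < (Q$i$k)\<^sup>2" "1/2 < (Q$i$l)\<^sup>2" for i k l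
    using unique_gt_half[of "\<lambda>k. (Q$i$k)\<^sup>2"] orthogonal_matrix_row_sq_sum[OF assms] that by simp
  have col: "i = i'" if "1/2 < (Q$i$k)\<^sup>2" "1/2 < (Q$i'$k)\<^sup>2" for i i' k
    using unique_gt_half[of "\<lambda>i. (Q$i$k)\<^sup>2"] orthogonal_matrix_col_sq_sum[OF assms] that by simp
  have "inj_on f S"
    by (rule inj_onI) (metis col f)
  then obtain \<sigma> where \<sigma>: "\<sigma> permutes UNIV" "\<And>i. i \<in> S \<Longrightarrow> \<sigma> i = f i"
    using inj_on_extends_to_permutation[of f S] by blast
  moreover have "\<sigma> i = k" if gt: "1/2 < (Q$i$k)\<^sup>2" for i k
  proof -
    have "i \<in> S"
      using gt by (auto simp: S_def)
    then show ?thesis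
      using \<sigma>(2) f row gt by metis
  qed
  ultimately show ?thesis
    using that by blast
qed

lemma signed_perm_matrix_frob_sq_diff:
  fixes Q :: "real^'n::finite^'n"
  assumes "orthogonal_matrix Q" "\<sigma> permutes UNIV"
  obtains P where "signed_perm_matrix P" "frob_sq (Q - P) = 2 * (\<Sum>i\<in>UNIV. 1 - \<bar>Q$i$\<sigma> i\<bar>)"
proof -
  define s where "s i = (if 0 \<le> Q$i$\<sigma> i then 1 else -1 :: real)" for i
  define P :: "real^'n^'n" where "P = (\<chi> i j. if j = \<sigma> i then s i else 0)"
  have "signed_perm_matrix P"
    unfolding signed_perm_matrix_def using assms(2)
    by (intro exI[of _ \<sigma>] exI[of _ s]) (auto simp: P_def s_def)
  moreover have "(\<Sum>j\<in>UNIV. ((Q - P)$i$j)\<^sup>2) = 2 * (1 - \<bar>Q$i$\<sigma> i\<bar>)" for i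
  proof -
    have "(\<Sum>j\<in>UNIV. ((Q - P)$i$j)\<^sup>2) =
        (\<Sum>j\<in>UNIV. (Q$i$j)\<^sup>2 - 2 * (if j = \<sigma> i then s i * Q$i$j else 0) + (if j = \<sigma> i then (s i)\<^sup>2 else 0))"
      by (intro sum.cong refl) (auto simp: P_def power2_eq_square algebra_simps)
    also have "\<dots> = 1 - 2 * (s i * Q$i$\<sigma> i) + (s i)\<^sup>2"
      using orthogonal_matrix_row_sq_sum[OF assms(1), of i]
      by (simp add: sum.distrib sum_subtractf sum_distrib_left[symmetric])
    also have "\<dots> = 2 * (1 - \<bar>Q$i$\<sigma> i\<bar>)"
      by (simp add: s_def)
    finally show ?thesis .
  qed
  then have "frob_sq (Q - P) = (\<Sum>i\<in>UNIV. 2 * (1 - \<bar>Q$i$\<sigma> i\<bar>))"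
    unfolding frob_sq_def by (rule sum.cong[OF refl])
  ultimately show ?thesis
    by (intro that) (simp_all add: sum_distrib_left)
qed

lemma orthogonal_row_deficit_ge:
  fixes Q :: "real^'n::finite^'n" and j :: "'r::finite"
  assumes "2 \<le> p" "0 \<le> \<theta>" "\<theta> \<le> 1" "orthogonal_matrix Q"
    and dominant: "\<And>k. 1/2 < (Q$i$k)\<^sup>2 \<Longrightarrow> k = k0"
  shows "kappa_p p * \<theta> * (1 - \<theta>) * (1 - \<bar>Q$i$k0\<bar>) \<le>
    \<theta> - pattern_expectation \<theta> (\<lambda>\<beta>. sqrt (masked_mass (\<lambda>k. (Q$i$k)\<^sup>2) (\<lambda>k. (k, j)) \<beta>) ^ p)"
proof -
  have w: "sum (\<lambda>k. (Q$i$k)\<^sup>2) UNIV = 1"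
    by (rule orthogonal_matrix_row_sq_sum[OF assms(4)])
  have "\<bar>Q$i$k0\<bar> \<le> 1"
    using member_le_sum[of k0 UNIV "\<lambda>k. (Q$i$k)\<^sup>2"] w by (simp add: abs_square_le_1)
  then have "\<bar>Q$i$k0\<bar> * \<bar>Q$i$k0\<bar> \<le> 1 * \<bar>Q$i$k0\<bar>"
    by (rule mult_right_mono) simp
  then have "(Q$i$k0)\<^sup>2 \<le> \<bar>Q$i$k0\<bar>"
    by (simp add: power2_eq_square)
  then have "kappa_p p * \<theta> * (1 - \<theta>) * (1 - \<bar>Q$i$k0\<bar>) \<le> kappa_p p * (\<theta> * (1 - \<theta>) * (1 - (Q$i$k0)\<^sup>2))"
    using assms kappa_p_nonneg[of p] by (simp add: mult_left_mono mult.assoc)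
  also have "\<dots> \<le> pattern_expectation \<theta> (\<lambda>\<beta>. masked_mass (\<lambda>k. (Q$i$k)\<^sup>2) (\<lambda>k. (k, j)) \<beta> -
      sqrt (masked_mass (\<lambda>k. (Q$i$k)\<^sup>2) (\<lambda>k. (k, j)) \<beta>) ^ p)"
    using assms w by (intro pattern_expectation_mass_gap_ge) (auto intro: injI)
  also have "\<dots> = \<theta> - pattern_expectation \<theta> (\<lambda>\<beta>. sqrt (masked_mass (\<lambda>k. (Q$i$k)\<^sup>2) (\<lambda>k. (k, j)) \<beta>) ^ p)"
    by (simp add: pattern_expectation_diff pattern_expectation_masked_mass w)
  finally show ?thesis .
qed

lemma BG_pnorm_deficit_ge:
  fixes Q :: "real^'n::finite^'n"
  assumes "2 \<le> p" "0 \<le> \<theta>" "\<theta> \<le> 1" "orthogonal_matrix Q"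
    and dominant: "\<And>i k. 1/2 < (Q$i$k)\<^sup>2 \<Longrightarrow> \<sigma> i = k"
  shows "kappa_p p * \<theta> * (1 - \<theta>) / real CARD('n) * (\<Sum>i\<in>UNIV. 1 - \<bar>Q$i$\<sigma> i\<bar>) \<le>
    \<theta> - 1 / (real CARD('n) * real CARD('r::finite) * gamma_p p) *
      (\<integral>x. entry_pnorm_pow p (Q ** (mat_of_entries x :: real^'r^'n)) \<partial>BG_matrix \<theta>)"
proof -
  define N where "N = real CARD('n)"
  define R where "R = real CARD('r)"
  define \<phi> where "\<phi> i j = pattern_expectation \<theta> (\<lambda>\<beta>. sqrt (masked_mass (\<lambda>k. (Q$i$k)\<^sup>2) (\<lambda>k. (k, j)) \<beta>) ^ p)"
    for i and j :: 'r
  define T where "T = (\<Sum>i\<in>UNIV. 1 - \<bar>Q$i$\<sigma> i\<bar>)"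
  have row: "kappa_p p * \<theta> * (1 - \<theta>) * (1 - \<bar>Q$i$\<sigma> i\<bar>) \<le> \<theta> - \<phi> i j" for i j
    unfolding \<phi>_def using assms(1-4) by (rule orthogonal_row_deficit_ge) (metis dominant)
  have NR: "0 < N" "0 < R"
    by (simp_all add: N_def R_def)
  have "R * (kappa_p p * \<theta> * (1 - \<theta>) * T) =
      (\<Sum>i\<in>UNIV. \<Sum>j\<in>(UNIV::'r set). kappa_p p * \<theta> * (1 - \<theta>) * (1 - \<bar>Q$i$\<sigma> i\<bar>))"
    by (simp add: T_def R_def sum_distrib_left mult_ac)
  also have "\<dots> \<le> (\<Sum>i\<in>UNIV. \<Sum>j\<in>UNIV. \<theta> - \<phi> i j)"
    by (intro sum_mono row)
  also have "\<dots> = N * R * \<theta> - (\<Sum>i\<in>UNIV. \<Sum>j\<in>UNIV. \<phi> i j)"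
    by (simp add: N_def R_def sum_subtractf)
  finally have total: "R * (kappa_p p * \<theta> * (1 - \<theta>) * T) \<le> N * R * \<theta> - (\<Sum>i\<in>UNIV. \<Sum>j\<in>UNIV. \<phi> i j)" .
  have "kappa_p p * \<theta> * (1 - \<theta>) / N * T = R * (kappa_p p * \<theta> * (1 - \<theta>) * T) / (N * R)"
    using NR by (simp add: field_simps)
  also have "\<dots> \<le> (N * R * \<theta> - (\<Sum>i\<in>UNIV. \<Sum>j\<in>UNIV. \<phi> i j)) / (N * R)"
    using total NR by (intro divide_right_mono) auto
  also have "\<dots> = \<theta> - 1 / (N * R * gamma_p p) * (gamma_p p * (\<Sum>i\<in>UNIV. \<Sum>j\<in>UNIV. \<phi> i j))"
    using NR gamma_p_pos[of p] by (simp add: field_simps)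
  finally show ?thesis
    using assms by (simp add: integral_entry_pnorm_pow_BG_matrix \<phi>_def T_def N_def R_def)
qed

theorem mainTheorem8:
  fixes p :: nat and \<theta> :: real and Q :: "real^'n::finite^'n"
  assumes "p > 2" and "0 < \<theta>" and "\<theta> < 1" and "orthogonal_matrix Q"
  shows "\<exists>P::real^'n^'n. signed_perm_matrix P \<and>
    \<theta> - (1 / (real CARD('n) * real CARD('r::finite) * gamma_p p)) *
        (\<integral>x. entry_pnorm_pow p (Q ** (mat_of_entries x :: real^'r^'n))
           \<partial>(BG_matrix \<theta> :: (('n \<times> 'r) \<Rightarrow> real) measure))
      \<ge> \<theta> * (1 - \<theta>) / (2 * real CARD('n) * C_p p) * frob_sq (Q - P)"
proof -
  obtain \<sigma> where \<sigma>: "\<sigma> permutes UNIV" "\<And>i k. 1/2 < (Q$i$k)\<^sup>2 \<Longrightarrow> \<sigma> i = k"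
    using orthogonal_matrix_obtain_permutation_dominant[OF assms(4)] by blast
  obtain P where P: "signed_perm_matrix P" "frob_sq (Q - P) = 2 * (\<Sum>i\<in>UNIV. 1 - \<bar>Q$i$\<sigma> i\<bar>)"
    using signed_perm_matrix_frob_sq_diff[OF assms(4) \<sigma>(1)] by blast
  have "\<theta> * (1 - \<theta>) / (2 * real CARD('n) * C_p p) * frob_sq (Q - P) =
      kappa_p p * \<theta> * (1 - \<theta>) / real CARD('n) * (\<Sum>i\<in>UNIV. 1 - \<bar>Q$i$\<sigma> i\<bar>)"
    by (simp add: P(2) C_p_eq)
  also have "\<dots> \<le> \<theta> - 1 / (real CARD('n) * real CARD('r) * gamma_p p) *
      (\<integral>x. entry_pnorm_pow p (Q ** (mat_of_entries x :: real^'r^'n)) \<partial>BG_matrix \<theta>)"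
    using assms \<sigma>(2) by (intro BG_pnorm_deficit_ge) auto
  finally show ?thesis
    using P(1) by auto
qed

end
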